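(* Let $n\geq 3$ and $q=p^h$. If $c$ is a codeword of minimum weight of $C(PG(n,q))^\perp$, then $supp(c)$ is contained in a plane of $PG(n,q)$.
   Context: $C(PG(n,q))$ is the $\mathbb{F}_p$-span of the incidence vectors of the hyperplanes of $PG(n,q)$, with coordinates indexed by points. $C^\perp$ is its dual with respect to the standard scalar product over $\mathbb{F}_p$. $supp(c)$ is the set of points at which $c$ is nonzero. *)

theory Defs
  imports Main
begin

text \<open>Projective space PG(n,q) over a finite field 'a with q = CARD('a) = p^h elements.
  Vectors of F_q^(n+1) are functions nat => 'a vanishing outside {0..n};
  a point is the set of nonzero scalar multiples of a nonzero vector.
  The prime field F_p is realised as the prime subfield of 'a.\<close>

definition pg_vecs :: "nat \<Rightarrow> (nat \<Rightarrow> 'a::field) set" where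
  "pg_vecs n = {v. \<forall>i>n. v i = 0}"

definition pg_point :: "(nat \<Rightarrow> 'a::field) \<Rightarrow> (nat \<Rightarrow> 'a) set" where
  "pg_point v = {(\<lambda>i. a * v i) | a. a \<noteq> 0}"

definition pg_points :: "nat \<Rightarrow> (nat \<Rightarrow> 'a::field) set set" where
  "pg_points n = {pg_point v | v. v \<in> pg_vecs n \<and> v \<noteq> (\<lambda>i. 0)}"

definition pg_dot :: "nat \<Rightarrow> (nat \<Rightarrow> 'a::field) \<Rightarrow> (nat \<Rightarrow> 'a) \<Rightarrow> 'a" where
  "pg_dot n u v = (\<Sum>i\<le>n. u i * v i)"

definition pg_hyperplanes :: "nat \<Rightarrow> (nat \<Rightarrow> 'a::field) set set set" where
  "pg_hyperplanes n =
     {{P \<in> pg_points n. \<forall>v\<in>P. pg_dot n u v = 0} | u. u \<in> pg_vecs n \<and> u \<noteq> (\<lambda>i. 0)}"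

definition pg_planes :: "nat \<Rightarrow> (nat \<Rightarrow> 'a::field) set set set" where
  "pg_planes n =
     {{P \<in> pg_points n. \<exists>a b d. (\<lambda>i. a * u1 i + b * u2 i + d * u3 i) \<in> P}
       | u1 u2 u3. u1 \<in> pg_vecs n \<and> u2 \<in> pg_vecs n \<and> u3 \<in> pg_vecs n \<and>
          (\<forall>a b d. (\<lambda>i. a * u1 i + b * u2 i + d * u3 i) = (\<lambda>i. 0) \<longrightarrow>
                     a = 0 \<and> b = 0 \<and> d = 0)}"

definition prime_field :: "'a::field set" where
  "prime_field = range of_nat"

definition incidence :: "'p set \<Rightarrow> 'p \<Rightarrow> 'a::field" where
  "incidence H P = (if P \<in> H then 1 else 0)"

text \<open>C(PG(n,q)): the F_p-span of the incidence vectors of hyperplanes.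
  Words are functions on points (taking value 0 off the point set).\<close>
definition pg_code :: "nat \<Rightarrow> ((nat \<Rightarrow> 'a::field) set \<Rightarrow> 'a) set" where
  "pg_code n = {(\<lambda>P. \<Sum>H\<in>pg_hyperplanes n. l H * incidence H P) | l.
                  \<forall>H. l H \<in> prime_field}"

definition pg_dual_code :: "nat \<Rightarrow> ((nat \<Rightarrow> 'a::field) set \<Rightarrow> 'a) set" where
  "pg_dual_code n = {c. (\<forall>P. c P \<in> prime_field) \<and> (\<forall>P. P \<notin> pg_points n \<longrightarrow> c P = 0) \<and>
       (\<forall>w\<in>pg_code n. (\<Sum>P\<in>pg_points n. c P * w P) = 0)}"

definition pg_supp :: "nat \<Rightarrow> ((nat \<Rightarrow> 'a::field) set \<Rightarrow> 'a) \<Rightarrow> (nat \<Rightarrow> 'a) set set" where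
  "pg_supp n c = {P \<in> pg_points n. c P \<noteq> 0}"

definition pg_weight :: "nat \<Rightarrow> ((nat \<Rightarrow> 'a::field) set \<Rightarrow> 'a) \<Rightarrow> nat" where
  "pg_weight n c = card (pg_supp n c)"

definition min_weight_codeword ::
  "((nat \<Rightarrow> 'a::field) set \<Rightarrow> 'a) set \<Rightarrow> nat \<Rightarrow> ((nat \<Rightarrow> 'a) set \<Rightarrow> 'a) \<Rightarrow> bool" where
  "min_weight_codeword C n c \<longleftrightarrow> c \<in> C \<and> pg_supp n c \<noteq> {} \<and>
     (\<forall>c'\<in>C. pg_supp n c' \<noteq> {} \<longrightarrow> pg_weight n c \<le> pg_weight n c')"

end

theory Submission
  imports Defs "HOL-Library.Function_Algebras" "HOL-Number_Theory.Residues"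
begin

text \<open>
  Write q = p^h and let c be a dual codeword of minimum weight. The proof has three parts.
  (1) The difference of the incidence vectors of two lines through a common point is a
  dual codeword of weight at most 2q, so c has weight at most 2q.
  (2) Projection: if c vanishes at a point <r>, projecting from <r> onto a hyperplane and
  summing c over the fibres gives again a dual codeword; its support lies in the
  projection of the support of c. This uses that c sums to zero over every hyperplane and
  (via a pencil of hyperplanes) over the whole space, counted on vectors.
  (3) If the support contained four independent points <a1>, <a2>, <a3>, <b>, a count
  shows that for some point <r> on one of the lines a_i a_j the line <r><b> meets the
  support only in <b>. Projecting from <r> identifies <a_i> and <a_j> and keeps the image
  of <b> in the support, producing a nonzero dual codeword of smaller weight.
  Hence the support vectors span a space of dimension at most three, i.e. lie in a plane.
\<close>

text \<open>In a finite field of order q we have q = 0, hence q - 1 = -1. This is what makes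
  the multiplicity q - 1 of a point (as a set of vectors) invisible up to sign.\<close>

lemma card_UNIV_eq_0: "of_nat (card (UNIV::'a set)) = (0::'a::{finite,field})"
  using CHAR_dvd_CARD[where 'a='a] of_nat_eq_0_iff_char_dvd by blast

lemma card_UNIV_ge_2: "card (UNIV::'a::{finite,field} set) \<ge> 2"
proof -
  have "card {0::'a, 1} \<le> card (UNIV::'a set)" by (rule card_mono) auto
  thus ?thesis by simp
qed

lemma card_UNIV_minus_1: "of_nat (card (UNIV::'a set) - 1) = (-1::'a::{finite,field})"
  using card_UNIV_ge_2[where 'a='a] card_UNIV_eq_0[where 'a='a] by (simp add: of_nat_diff)

lemma prime_field_0: "0 \<in> prime_field"
  and prime_field_1: "1 \<in> prime_field"
  unfolding prime_field_def by (metis of_nat_0 rangeI, metis of_nat_1 rangeI)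

lemma prime_field_minus_1: "(-1::'a::{finite,field}) \<in> prime_field"
  unfolding prime_field_def by (metis card_UNIV_minus_1 rangeI)

lemma prime_field_sum: "(\<And>x. x \<in> A \<Longrightarrow> f x \<in> prime_field) \<Longrightarrow> sum f A \<in> prime_field"
proof (induction A rule: infinite_finite_induct)
  case (insert x A)
  then obtain k l where "f x = of_nat k" "sum f A = of_nat l"
    unfolding prime_field_def by (metis insertI1 insertI2 rangeE)
  with insert.hyps show ?case unfolding prime_field_def by (metis of_nat_add rangeI sum.insert)
qed (auto intro: prime_field_0)

definition smul :: "'a \<Rightarrow> (nat \<Rightarrow> 'a) \<Rightarrow> nat \<Rightarrow> 'a::field" where
  "smul a v = (\<lambda>i. a * v i)"

lemma smul_apply [simp]: "smul a v i = a * v i"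
  by (simp add: smul_def)

lemma smul_smul [simp]: "smul a (smul b v) = smul (a * b) v"
  by (simp add: fun_eq_iff)

lemma smul_eq_zero_iff: "smul a v = (\<lambda>i. 0) \<longleftrightarrow> a = 0 \<or> v = (\<lambda>i. 0)"
  by (auto simp: fun_eq_iff)

interpretation vec: vector_space smul
  by unfold_locales (auto simp: fun_eq_iff algebra_simps)

lemma vecs_smul [simp]: "v \<in> pg_vecs n \<Longrightarrow> smul a v \<in> pg_vecs n"
  by (simp add: pg_vecs_def)

lemma finite_vecs: "finite (pg_vecs n :: (nat \<Rightarrow> 'a::{finite,field}) set)"
proof -
  let ?ext = "\<lambda>g i. if i \<le> n then g i else (0::'a)"
  have "pg_vecs n \<subseteq> ?ext ` PiE {..n} (\<lambda>_. UNIV)"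
  proof
    fix v :: "nat \<Rightarrow> 'a" assume "v \<in> pg_vecs n"
    thus "v \<in> ?ext ` PiE {..n} (\<lambda>_. UNIV)"
      by (intro image_eqI[where x="restrict v {..n}"]) (auto simp: pg_vecs_def fun_eq_iff)
  qed
  thus ?thesis by (rule finite_subset) (simp add: finite_PiE)
qed

lemma mem_pg_point: "w \<in> pg_point v \<longleftrightarrow> (\<exists>a. a \<noteq> 0 \<and> w = smul a v)"
  by (auto simp: pg_point_def smul_def)

lemma pg_point_self: "v \<in> pg_point v"
  unfolding mem_pg_point by (intro exI[of _ 1]) (simp add: smul_def)

lemma pg_point_smul: "a \<noteq> 0 \<Longrightarrow> pg_point (smul a v) = pg_point v"
proof (intro equalityI subsetI)
  fix w assume "a \<noteq> 0" "w \<in> pg_point v"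
  then obtain b where "b \<noteq> 0" "w = smul b v" by (auto simp: mem_pg_point)
  with \<open>a \<noteq> 0\<close> have "w = smul (b / a) (smul a v)" "b / a \<noteq> 0" by simp_all
  thus "w \<in> pg_point (smul a v)" unfolding mem_pg_point by blast
next
  fix w assume "a \<noteq> 0" "w \<in> pg_point (smul a v)"
  then obtain b where "b \<noteq> 0" "w = smul (b * a) v" by (auto simp: mem_pg_point)
  with \<open>a \<noteq> 0\<close> show "w \<in> pg_point v" unfolding mem_pg_point by (metis mult_eq_0_iff)
qed

lemma pg_point_eq_iff: "pg_point v = pg_point w \<longleftrightarrow> w \<in> pg_point v"
proof
  assume "w \<in> pg_point v"
  then obtain a where "a \<noteq> 0" "w = smul a v" by (auto simp: mem_pg_point)
  thus "pg_point v = pg_point w" by (simp add: pg_point_smul)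
qed (use pg_point_self in blast)

lemma pg_points_iff:
  "P \<in> pg_points n \<longleftrightarrow> (\<exists>v. v \<in> pg_vecs n \<and> v \<noteq> (\<lambda>i. 0) \<and> P = pg_point v)"
  by (auto simp: pg_points_def)

lemma pg_point_in_points: "v \<in> pg_vecs n \<Longrightarrow> v \<noteq> (\<lambda>i. 0) \<Longrightarrow> pg_point v \<in> pg_points n"
  by (auto simp: pg_points_iff)

lemma point_eq_of_mem:
  assumes "P \<in> pg_points n" "v \<in> P"
  shows "P = pg_point v \<and> v \<in> pg_vecs n \<and> v \<noteq> (\<lambda>i. 0)"
proof -
  obtain w where w: "w \<in> pg_vecs n" "w \<noteq> (\<lambda>i. 0)" "P = pg_point w"
    using assms(1) by (auto simp: pg_points_iff)
  then obtain a where "a \<noteq> 0" "v = smul a w" using assms(2) by (auto simp: mem_pg_point)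
  with w show ?thesis by (auto simp: pg_point_smul smul_eq_zero_iff)
qed

lemma zero_point_notin_points: "pg_point (\<lambda>i. 0::'a::field) \<notin> pg_points n"
  using point_eq_of_mem pg_point_self by blast

lemma card_point:
  assumes "v \<noteq> (\<lambda>i. 0)"
  shows "card (pg_point v :: (nat \<Rightarrow> 'a::{finite,field}) set) = card (UNIV::'a set) - 1"
proof -
  obtain k where k: "v k \<noteq> 0" using assms by auto
  have "pg_point v = (\<lambda>a. smul a v) ` (UNIV - {0})" by (auto simp: pg_point_def smul_def)
  moreover have "inj_on (\<lambda>a. smul a v) (UNIV - {0})"
    by (rule inj_onI) (metis k mult_right_cancel smul_apply)
  ultimately show ?thesis by (simp add: card_image card_Diff_singleton)
qed

lemma card_point_of_points:
  "P \<in> pg_points n \<Longrightarrow> card (P :: (nat \<Rightarrow> 'a::{finite,field}) set) = card (UNIV::'a set) - 1"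
  by (auto simp: pg_points_iff card_point)

lemma finite_points: "finite (pg_points n :: (nat \<Rightarrow> 'a::{finite,field}) set set)"
proof -
  have "pg_points n \<subseteq> pg_point ` (pg_vecs n :: (nat \<Rightarrow> 'a) set)"
    by (auto simp: pg_points_iff)
  thus ?thesis by (rule finite_subset) (simp add: finite_vecs)
qed

lemma dot_comm: "pg_dot n u v = pg_dot n v u"
  by (simp add: pg_dot_def mult.commute)

lemma dot_smul: "pg_dot n u (smul a v) = a * pg_dot n u v"
  by (simp add: pg_dot_def sum_distrib_left algebra_simps)

lemma dot_lin: "pg_dot n u (\<lambda>i. x i + t * y i) = pg_dot n u x + t * pg_dot n u y"
  by (simp add: pg_dot_def algebra_simps sum.distrib sum_distrib_left)

lemma dot_zero: "pg_dot n (\<lambda>i. 0) v = 0"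
  by (simp add: pg_dot_def)

lemma dot_unit:
  assumes "j \<le> n"
  shows "pg_dot n (\<lambda>i. if i = j then a else 0) v = a * v j"
proof -
  have "pg_dot n (\<lambda>i. if i = j then a else 0) v = (\<Sum>i\<le>n. if i = j then a * v j else 0)"
    unfolding pg_dot_def by (rule sum.cong) auto
  thus ?thesis using assms by simp
qed

lemma dot_two:
  assumes "j \<noteq> k" "j \<le> n" "k \<le> n"
  shows "pg_dot n (\<lambda>i. if i = j then a else if i = k then b else 0) v = a * v j + b * v k"
proof -
  have "pg_dot n (\<lambda>i. if i = j then a else if i = k then b else 0) v
       = (\<Sum>i\<le>n. (if i = j then a * v j else 0) + (if i = k then b * v k else 0))"
    unfolding pg_dot_def by (rule sum.cong) (use assms(1) in auto)
  also have "\<dots> = a * v j + b * v k" using assms by (simp add: sum.distrib)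
  finally show ?thesis .
qed

subsection \<open>Hyperplanes and the dual code\<close>

definition hyperplane :: "nat \<Rightarrow> (nat \<Rightarrow> 'a::field) \<Rightarrow> (nat \<Rightarrow> 'a) set set" where
  "hyperplane n u = {P \<in> pg_points n. \<forall>v\<in>P. pg_dot n u v = 0}"

lemma hyperplane_subset_points: "hyperplane n u \<subseteq> pg_points n"
  by (auto simp: hyperplane_def)

lemma pg_hyperplanes_eq:
  "pg_hyperplanes n = {hyperplane n u | u. u \<in> pg_vecs n \<and> u \<noteq> (\<lambda>i. 0)}"
  unfolding pg_hyperplanes_def hyperplane_def by blast

lemma pg_point_in_hyperplane:
  "pg_point v \<in> hyperplane n u \<longleftrightarrow> v \<in> pg_vecs n \<and> v \<noteq> (\<lambda>i. 0) \<and> pg_dot n u v = 0"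
proof
  assume h: "pg_point v \<in> hyperplane n u"
  hence "pg_point v \<in> pg_points n" by (simp add: hyperplane_def)
  thus "v \<in> pg_vecs n \<and> v \<noteq> (\<lambda>i. 0) \<and> pg_dot n u v = 0"
    using point_eq_of_mem[OF _ pg_point_self] h pg_point_self by (auto simp: hyperplane_def)
qed (auto simp: hyperplane_def pg_point_in_points mem_pg_point dot_smul)

lemma finite_hyperplanes: "finite (pg_hyperplanes n :: (nat \<Rightarrow> 'a::{finite,field}) set set set)"
proof -
  have "pg_hyperplanes n \<subseteq> hyperplane n ` (pg_vecs n :: (nat \<Rightarrow> 'a) set)"
    by (auto simp: pg_hyperplanes_eq)
  thus ?thesis by (rule finite_subset) (simp add: finite_vecs)
qed

lemma pairing_with_incidences:
  fixes c :: "(nat \<Rightarrow> 'a::{finite,field}) set \<Rightarrow> 'a"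
  shows "(\<Sum>P\<in>pg_points n. c P * (\<Sum>H\<in>pg_hyperplanes n. l H * incidence H P))
       = (\<Sum>H\<in>pg_hyperplanes n. l H * (\<Sum>P\<in>H. c P))"
proof -
  have H_sum: "(\<Sum>P\<in>pg_points n. c P * incidence H P) = (\<Sum>P\<in>H. c P)"
    if "H \<in> pg_hyperplanes n" for H
  proof -
    have "(\<Sum>P\<in>pg_points n. c P * incidence H P) = (\<Sum>P\<in>pg_points n. if P \<in> H then c P else 0)"
      by (rule sum.cong) (auto simp: incidence_def)
    also have "\<dots> = (\<Sum>P\<in>{P \<in> pg_points n. P \<in> H}. c P)"
      by (simp add: sum.inter_filter[OF finite_points])
    also have "{P \<in> pg_points n. P \<in> H} = H"
      using that hyperplane_subset_points by (auto simp: pg_hyperplanes_eq)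
    finally show ?thesis .
  qed
  have "(\<Sum>P\<in>pg_points n. c P * (\<Sum>H\<in>pg_hyperplanes n. l H * incidence H P))
      = (\<Sum>H\<in>pg_hyperplanes n. l H * (\<Sum>P\<in>pg_points n. c P * incidence H P))"
    by (simp add: sum_distrib_left algebra_simps) (rule sum.swap)
  also have "\<dots> = (\<Sum>H\<in>pg_hyperplanes n. l H * (\<Sum>P\<in>H. c P))"
    by (rule sum.cong) (simp_all add: H_sum)
  finally show ?thesis .
qed

text \<open>Since C is spanned by the hyperplanes, a word lies in the dual code iff its
  values are in F_p, it vanishes off the points, and it sums to 0 over every hyperplane.\<close>

lemma dual_code_iff:
  fixes c :: "(nat \<Rightarrow> 'a::{finite,field}) set \<Rightarrow> 'a"
  shows "c \<in> pg_dual_code n \<longleftrightarrow>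
     (\<forall>P. c P \<in> prime_field) \<and> (\<forall>P. P \<notin> pg_points n \<longrightarrow> c P = 0) \<and>
     (\<forall>u\<in>pg_vecs n. u \<noteq> (\<lambda>i. 0) \<longrightarrow> (\<Sum>P\<in>hyperplane n u. c P) = 0)"
proof -
  have "(\<forall>w\<in>pg_code n. (\<Sum>P\<in>pg_points n. c P * w P) = 0) \<longleftrightarrow>
        (\<forall>u\<in>pg_vecs n. u \<noteq> (\<lambda>i. 0) \<longrightarrow> (\<Sum>P\<in>hyperplane n u. c P) = 0)"
  proof
    assume orth: "\<forall>w\<in>pg_code n. (\<Sum>P\<in>pg_points n. c P * w P) = 0"
    show "\<forall>u\<in>pg_vecs n. u \<noteq> (\<lambda>i. 0) \<longrightarrow> (\<Sum>P\<in>hyperplane n u. c P) = 0"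
    proof (intro ballI impI)
      fix u :: "nat \<Rightarrow> 'a" assume "u \<in> pg_vecs n" "u \<noteq> (\<lambda>i. 0)"
      hence H: "hyperplane n u \<in> pg_hyperplanes n" by (auto simp: pg_hyperplanes_eq)
      define l :: "(nat \<Rightarrow> 'a) set set \<Rightarrow> 'a" where "l H = (if H = hyperplane n u then 1 else 0)" for H
      have code: "(\<lambda>P. \<Sum>H\<in>pg_hyperplanes n. l H * incidence H P) \<in> pg_code n"
        unfolding pg_code_def l_def using prime_field_0 prime_field_1 by auto
      have "(\<Sum>P\<in>pg_points n. c P * (\<Sum>H\<in>pg_hyperplanes n. l H * incidence H P)) = 0"
        using orth[rule_format, OF code] by simp
      hence "(\<Sum>H\<in>pg_hyperplanes n. l H * (\<Sum>P\<in>H. c P)) = 0"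
        by (simp only: pairing_with_incidences)
      moreover have "(\<Sum>H\<in>pg_hyperplanes n. l H * (\<Sum>P\<in>H. c P))
          = (\<Sum>H\<in>pg_hyperplanes n. if H = hyperplane n u then (\<Sum>P\<in>H. c P) else 0)"
        by (rule sum.cong) (auto simp: l_def)
      ultimately show "(\<Sum>P\<in>hyperplane n u. c P) = 0"
        using H by (simp add: sum.delta[OF finite_hyperplanes])
    qed
  next
    assume "\<forall>u\<in>pg_vecs n. u \<noteq> (\<lambda>i. 0) \<longrightarrow> (\<Sum>P\<in>hyperplane n u. c P) = 0"
    hence "(\<Sum>P\<in>H. c P) = 0" if "H \<in> pg_hyperplanes n" for H
      using that by (auto simp: pg_hyperplanes_eq)
    thus "\<forall>w\<in>pg_code n. (\<Sum>P\<in>pg_points n. c P * w P) = 0"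
      unfolding pg_code_def by (auto simp: pairing_with_incidences)
  qed
  thus ?thesis unfolding pg_dual_code_def by blast
qed

lemma dual_code_zero_point: "c \<in> pg_dual_code n \<Longrightarrow> c (pg_point (\<lambda>i. 0::'a::field)) = 0"
  by (simp add: pg_dual_code_def zero_point_notin_points)

lemma sum_hyperplane_vectors:
  fixes g :: "(nat \<Rightarrow> 'a::{finite,field}) set \<Rightarrow> 'b::comm_ring_1"
  shows "(\<Sum>v\<in>{v \<in> pg_vecs n. v \<noteq> (\<lambda>i. 0) \<and> pg_dot n u v = 0}. g (pg_point v))
         = of_nat (card (UNIV::'a set) - 1) * (\<Sum>P\<in>hyperplane n u. g P)"
proof -
  let ?S = "{v \<in> pg_vecs n. v \<noteq> (\<lambda>i. 0) \<and> pg_dot n u v = (0::'a)}"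
  have fS: "finite ?S" by (rule finite_subset[OF _ finite_vecs]) auto
  have fH: "finite (hyperplane n u)"
    using finite_points hyperplane_subset_points by (rule finite_subset[rotated])
  have im: "pg_point ` ?S \<subseteq> hyperplane n u" by (auto simp: pg_point_in_hyperplane)
  have fibre: "{v \<in> ?S. pg_point v = P} = P" if P: "P \<in> hyperplane n u" for P
  proof -
    have Pp: "P \<in> pg_points n" using P hyperplane_subset_points by blast
    show ?thesis
    proof (intro equalityI subsetI)
      fix v assume "v \<in> {v \<in> ?S. pg_point v = P}"
      thus "v \<in> P" using pg_point_self by blast
    next
      fix v assume "v \<in> P"
      with P show "v \<in> {v \<in> ?S. pg_point v = P}"
        using point_eq_of_mem[OF Pp] by (auto simp: hyperplane_def)
    qed
  qed
  have "(\<Sum>v\<in>?S. g (pg_point v)) = (\<Sum>P\<in>hyperplane n u. \<Sum>v\<in>{v \<in> ?S. pg_point v = P}. g (pg_point v))"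
    by (rule sum.group[OF fS fH im, symmetric])
  also have "\<dots> = (\<Sum>P\<in>hyperplane n u. of_nat (card (UNIV::'a set) - 1) * g P)"
  proof (rule sum.cong[OF refl])
    fix P assume P: "P \<in> hyperplane n u"
    have "(\<Sum>v\<in>{v \<in> ?S. pg_point v = P}. g (pg_point v)) = (\<Sum>v\<in>P. g P)"
      using fibre[OF P] by (metis (mono_tags, lifting) mem_Collect_eq sum.cong)
    also have "\<dots> = of_nat (card (UNIV::'a set) - 1) * g P"
      using P hyperplane_subset_points card_point_of_points by (metis subsetD sum_constant)
    finally show "(\<Sum>v\<in>{v \<in> ?S. pg_point v = P}. g (pg_point v)) = of_nat (card (UNIV::'a set) - 1) * g P" .
  qed
  finally show ?thesis by (simp add: sum_distrib_left)
qed

text \<open>Hence a dual codeword, read as a function of vectors, sums to 0 over every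
  hyperplane of F_q^(n+1) (the zero vector contributes nothing).\<close>

lemma dual_code_sum_hyperplane_vectors:
  fixes c :: "(nat \<Rightarrow> 'a::{finite,field}) set \<Rightarrow> 'a"
  assumes c: "c \<in> pg_dual_code n" and u: "u \<in> pg_vecs n" "u \<noteq> (\<lambda>i. 0)"
  shows "(\<Sum>v\<in>{v \<in> pg_vecs n. pg_dot n u v = 0}. c (pg_point v)) = 0"
proof -
  have fin: "finite {v \<in> pg_vecs n. pg_dot n u v = (0::'a)}"
    by (rule finite_subset[OF _ finite_vecs]) auto
  have "(\<Sum>v\<in>{v \<in> pg_vecs n. pg_dot n u v = 0}. c (pg_point v))
      = (\<Sum>v\<in>{v \<in> pg_vecs n. v \<noteq> (\<lambda>i. 0) \<and> pg_dot n u v = 0}. c (pg_point v))"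
    by (rule sum.mono_neutral_right[OF fin]) (auto simp: dual_code_zero_point[OF c])
  also have "\<dots> = 0"
    using c u by (simp add: sum_hyperplane_vectors dual_code_iff)
  finally show ?thesis .
qed

text \<open>The pencil of hyperplanes v_0 + t v_1 = 0 (t in F_q) together with v_1 = 0 covers
  every vector off the axis v_0 = v_1 = 0 exactly once and every vector of the axis
  q + 1 times, i.e. once modulo p.\<close>

lemma pencil_multiplicity:
  fixes v :: "nat \<Rightarrow> 'a::{finite,field}"
  shows "of_nat (card {t::'a. v 0 + t * v 1 = 0}) + (if v 1 = 0 then 1 else 0) = (1::'a)"
proof (cases "v 1 = 0")
  case False
  hence "{t::'a. v 0 + t * v 1 = 0} = {- v 0 / v 1}"
    by (auto simp: add_eq_0_iff field_simps)
  thus ?thesis using False by simp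
next
  case True
  hence "{t::'a. v 0 + t * v 1 = 0} = (if v 0 = 0 then UNIV else {})" by auto
  thus ?thesis using True card_UNIV_eq_0[where 'a='a] by simp
qed

lemma sum_vectors_from_hyperplanes:
  fixes f :: "(nat \<Rightarrow> 'a::{finite,field}) \<Rightarrow> 'a"
  assumes n: "n \<ge> 1"
    and hyp: "\<And>u. u \<in> pg_vecs n \<Longrightarrow> u \<noteq> (\<lambda>i. 0) \<Longrightarrow>
                  (\<Sum>v\<in>{v \<in> pg_vecs n. pg_dot n u v = 0}. f v) = 0"
  shows "(\<Sum>v\<in>pg_vecs n. f v) = 0"
proof -
  have fin: "finite (pg_vecs n :: (nat \<Rightarrow> 'a) set)" by (rule finite_vecs)
  have pencil: "(\<Sum>v\<in>{v \<in> pg_vecs n. v 0 + t * v 1 = 0}. f v) = 0" for t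
  proof -
    let ?u = "(\<lambda>i. if i = 0 then 1 else if i = 1 then t else 0) :: nat \<Rightarrow> 'a"
    have u: "?u \<in> pg_vecs n" "?u \<noteq> (\<lambda>i. 0)" using n by (auto simp: pg_vecs_def fun_eq_iff)
    have "pg_dot n ?u v = v 0 + t * v 1" for v using dot_two[of 0 1 n 1 t v] n by simp
    thus ?thesis using hyp[OF u] by simp
  qed
  have axis: "(\<Sum>v\<in>{v \<in> pg_vecs n. v 1 = 0}. f v) = 0"
  proof -
    let ?u = "(\<lambda>i. if i = 1 then 1 else 0) :: nat \<Rightarrow> 'a"
    have u: "?u \<in> pg_vecs n" "?u \<noteq> (\<lambda>i. 0)" using n by (auto simp: pg_vecs_def fun_eq_iff)
    have "pg_dot n ?u v = v 1" for v using dot_unit[of 1 n 1 v] n by simp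
    thus ?thesis using hyp[OF u] by simp
  qed
  have "(\<Sum>v\<in>pg_vecs n. f v)
      = (\<Sum>v\<in>pg_vecs n. of_nat (card {t::'a. v 0 + t * v 1 = 0}) * f v + (if v 1 = 0 then f v else 0))"
  proof (rule sum.cong[OF refl])
    fix v :: "nat \<Rightarrow> 'a"
    have "f v = (of_nat (card {t::'a. v 0 + t * v 1 = 0}) + (if v 1 = 0 then 1 else 0)) * f v"
      by (simp only: pencil_multiplicity mult_1)
    thus "f v = of_nat (card {t::'a. v 0 + t * v 1 = 0}) * f v + (if v 1 = 0 then f v else 0)"
      by (cases "v 1 = 0") (simp_all add: distrib_right)
  qed
  also have "\<dots> = (\<Sum>v\<in>pg_vecs n. \<Sum>t\<in>(UNIV::'a set). if v 0 + t * v 1 = 0 then f v else 0)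
                 + (\<Sum>v\<in>{v \<in> pg_vecs n. v 1 = 0}. f v)"
    by (simp add: sum.distrib sum.If_cases sum.inter_filter[OF fin])
  also have "(\<Sum>v\<in>pg_vecs n. \<Sum>t\<in>(UNIV::'a set). if v 0 + t * v 1 = 0 then f v else 0)
           = (\<Sum>t\<in>(UNIV::'a set). \<Sum>v\<in>{v \<in> pg_vecs n. v 0 + t * v 1 = 0}. f v)"
    by (subst sum.swap) (simp add: sum.inter_filter[OF fin])
  finally show ?thesis by (simp only: pencil axis sum.neutral_const add_0)
qed

lemma dual_code_sum_vectors:
  fixes c :: "(nat \<Rightarrow> 'a::{finite,field}) set \<Rightarrow> 'a"
  assumes "c \<in> pg_dual_code n" "n \<ge> 1"
  shows "(\<Sum>v\<in>pg_vecs n. c (pg_point v)) = 0"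
  using sum_vectors_from_hyperplanes[OF assms(2)] dual_code_sum_hyperplane_vectors[OF assms(1)] .

subsection \<open>Projecting a dual codeword from a point\<close>

text \<open>A dual codeword vanishes at <0>, so a nonzero value at <v> puts <v> in the support.\<close>

lemma pg_point_in_supp:
  "c \<in> pg_dual_code n \<Longrightarrow> v \<in> pg_vecs n \<Longrightarrow> c (pg_point v) \<noteq> 0 \<Longrightarrow> pg_point v \<in> pg_supp n c"
proof -
  assume c: "c \<in> pg_dual_code n" and v: "v \<in> pg_vecs n" "c (pg_point v) \<noteq> 0"
  hence "v \<noteq> (\<lambda>i. 0)" using dual_code_zero_point by metis
  with v show "pg_point v \<in> pg_supp n c" by (simp add: pg_supp_def pg_point_in_points)
qed

lemma finite_supp: "finite (pg_supp n (c :: (nat \<Rightarrow> 'a::{finite,field}) set \<Rightarrow> 'a))"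
  by (rule finite_subset[OF _ finite_points]) (auto simp: pg_supp_def)

text \<open>For w.r = 1 the map v \<mapsto> v - (w.v) r is the linear projection onto the hyperplane
  w.v = 0 with kernel spanned by r; on points it is the projection from the point <r>.\<close>

definition proj :: "nat \<Rightarrow> (nat \<Rightarrow> 'a::field) \<Rightarrow> (nat \<Rightarrow> 'a) \<Rightarrow> (nat \<Rightarrow> 'a) \<Rightarrow> nat \<Rightarrow> 'a" where
  "proj n w r v = (\<lambda>i. v i - pg_dot n w v * r i)"

definition proj_point :: "nat \<Rightarrow> (nat \<Rightarrow> 'a::field) \<Rightarrow> (nat \<Rightarrow> 'a) \<Rightarrow> (nat \<Rightarrow> 'a) set \<Rightarrow> (nat \<Rightarrow> 'a) set" where
  "proj_point n w r P = pg_point (proj n w r (SOME v. v \<in> P))"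

definition projected_word ::
  "nat \<Rightarrow> (nat \<Rightarrow> 'a::{finite,field}) \<Rightarrow> (nat \<Rightarrow> 'a) \<Rightarrow> ((nat \<Rightarrow> 'a) set \<Rightarrow> 'a) \<Rightarrow> (nat \<Rightarrow> 'a) set \<Rightarrow> 'a"
  where "projected_word n w r c P =
    (if P \<in> pg_points n then (\<Sum>v\<in>{v \<in> pg_vecs n. proj n w r v \<in> P}. c (pg_point v)) else 0)"

lemma proj_vecs: "v \<in> pg_vecs n \<Longrightarrow> r \<in> pg_vecs n \<Longrightarrow> proj n w r v \<in> pg_vecs n"
  by (simp add: pg_vecs_def proj_def)

lemma proj_smul: "proj n w r (smul a v) = smul a (proj n w r v)"
  by (simp add: proj_def dot_smul fun_eq_iff algebra_simps)

lemma dot_proj: "pg_dot n u (proj n w r v) = pg_dot n (\<lambda>i. u i - pg_dot n u r * w i) v"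
proof -
  have "pg_dot n u (proj n w r v) = (\<Sum>i\<le>n. u i * v i - pg_dot n w v * (u i * r i))"
    unfolding proj_def pg_dot_def[of n u "\<lambda>i. v i - pg_dot n w v * r i"]
    by (rule sum.cong) (simp_all add: algebra_simps)
  also have "\<dots> = pg_dot n u v - pg_dot n w v * pg_dot n u r"
    by (simp add: sum_subtractf sum_distrib_left pg_dot_def[of n u v] pg_dot_def[of n u r])
  finally have "pg_dot n u (proj n w r v) = pg_dot n u v - pg_dot n w v * pg_dot n u r" .
  moreover have "pg_dot n (\<lambda>i. u i - pg_dot n u r * w i) v = (\<Sum>i\<le>n. u i * v i - pg_dot n u r * (w i * v i))"
    unfolding pg_dot_def[of n "\<lambda>i. u i - pg_dot n u r * w i" v]
    by (rule sum.cong) (simp_all add: algebra_simps)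
  moreover have "\<dots> = pg_dot n u v - pg_dot n u r * pg_dot n w v"
    by (simp add: sum_subtractf sum_distrib_left pg_dot_def[of n u v] pg_dot_def[of n w v])
  ultimately show ?thesis by (simp add: mult.commute)
qed

lemma proj_point_pg_point: "proj_point n w r (pg_point v) = pg_point (proj n w r v)"
proof -
  have "(SOME x. x \<in> pg_point v) \<in> pg_point v" by (rule someI[of _ v]) (rule pg_point_self)
  then obtain a where "a \<noteq> 0" "(SOME x. x \<in> pg_point v) = smul a v" by (auto simp: mem_pg_point)
  thus ?thesis by (simp add: proj_point_def proj_smul pg_point_smul)
qed

text \<open>Vectors projecting to 0 are multiples of r; so if c vanishes at <r>, it vanishes
  on the whole kernel.\<close>

lemma vanish_on_proj_kernel:
  fixes c :: "(nat \<Rightarrow> 'a::{finite,field}) set \<Rightarrow> 'a"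
  assumes c: "c \<in> pg_dual_code n" and cr: "c (pg_point r) = 0"
    and kernel: "proj n w r v = (\<lambda>i. 0)"
  shows "c (pg_point v) = 0"
proof -
  have v: "v = smul (pg_dot n w v) r" using kernel by (simp add: proj_def fun_eq_iff)
  show ?thesis
  proof (cases "pg_dot n w v = 0")
    case True
    with v have "v = (\<lambda>i. 0)" by (simp add: fun_eq_iff)
    thus ?thesis using dual_code_zero_point[OF c] by simp
  next
    case False
    with v cr show ?thesis by (metis pg_point_smul)
  qed
qed

text \<open>The projected word is again a dual codeword: its sum over a hyperplane H equals
  the sum of c over the vectors of the preimage of H, which is a hyperplane or the
  whole space.\<close>

lemma projected_word_dual:
  fixes c :: "(nat \<Rightarrow> 'a::{finite,field}) set \<Rightarrow> 'a"
  assumes c: "c \<in> pg_dual_code n" and n: "n \<ge> 1" and r: "r \<in> pg_vecs n" and w: "w \<in> pg_vecs n"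
    and cr: "c (pg_point r) = 0"
  shows "projected_word n w r c \<in> pg_dual_code n"
  unfolding dual_code_iff
proof (intro conjI allI impI ballI)
  fix P show "projected_word n w r c P \<in> prime_field"
    using c unfolding projected_word_def dual_code_iff by (auto intro!: prime_field_sum prime_field_0)
next
  fix P :: "(nat \<Rightarrow> 'a) set" assume "P \<notin> pg_points n"
  thus "projected_word n w r c P = 0" by (simp add: projected_word_def)
next
  fix u :: "nat \<Rightarrow> 'a" assume u: "u \<in> pg_vecs n" "u \<noteq> (\<lambda>i. 0)"
  have fin: "finite (pg_vecs n :: (nat \<Rightarrow> 'a) set)" by (rule finite_vecs)
  let ?B = "{v \<in> pg_vecs n. proj n w r v \<noteq> (\<lambda>i. 0) \<and> pg_dot n u (proj n w r v) = 0}"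
  let ?A = "{v \<in> pg_vecs n. pg_dot n u (proj n w r v) = 0}"
  have fB: "finite ?B" by (rule finite_subset[OF _ fin]) auto
  have fA: "finite ?A" by (rule finite_subset[OF _ fin]) auto
  have fH: "finite (hyperplane n u)"
    using finite_points hyperplane_subset_points by (rule finite_subset[rotated])
  have im: "(\<lambda>v. pg_point (proj n w r v)) ` ?B \<subseteq> hyperplane n u"
    using r by (auto simp: pg_point_in_hyperplane proj_vecs)
  have fibre: "{v \<in> pg_vecs n. proj n w r v \<in> P} = {v \<in> ?B. pg_point (proj n w r v) = P}"
    if P: "P \<in> hyperplane n u" for P
  proof (intro equalityI subsetI)
    fix v assume v: "v \<in> {v \<in> pg_vecs n. proj n w r v \<in> P}"
    have "P \<in> pg_points n" using P hyperplane_subset_points by blast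
    hence rep: "P = pg_point (proj n w r v)" "proj n w r v \<noteq> (\<lambda>i. 0)"
      using point_eq_of_mem v by blast+
    hence "pg_dot n u (proj n w r v) = 0" using P by (simp add: pg_point_in_hyperplane)
    thus "v \<in> {v \<in> ?B. pg_point (proj n w r v) = P}" using rep v by simp
  next
    fix v assume "v \<in> {v \<in> ?B. pg_point (proj n w r v) = P}"
    thus "v \<in> {v \<in> pg_vecs n. proj n w r v \<in> P}" using pg_point_self by blast
  qed
  have "(\<Sum>P\<in>hyperplane n u. projected_word n w r c P)
      = (\<Sum>P\<in>hyperplane n u. \<Sum>v\<in>{v \<in> ?B. pg_point (proj n w r v) = P}. c (pg_point v))"
    using hyperplane_subset_points fibre by (intro sum.cong) (auto simp: projected_word_def)
  also have "\<dots> = (\<Sum>v\<in>?B. c (pg_point v))" by (rule sum.group[OF fB fH im])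
  also have "\<dots> = (\<Sum>v\<in>?A. c (pg_point v))"
    by (rule sum.mono_neutral_left[OF fA]) (auto intro: vanish_on_proj_kernel[OF c cr])
  also have "?A = {v \<in> pg_vecs n. pg_dot n (\<lambda>i. u i - pg_dot n u r * w i) v = 0}"
    by (simp add: dot_proj)
  also have "(\<Sum>v\<in>\<dots>. c (pg_point v)) = 0"
  proof (cases "(\<lambda>i. u i - pg_dot n u r * w i) = (\<lambda>i. 0)")
    case True
    thus ?thesis using dual_code_sum_vectors[OF c n] by (simp add: dot_zero)
  next
    case False
    have "(\<lambda>i. u i - pg_dot n u r * w i) \<in> pg_vecs n" using u w by (simp add: pg_vecs_def)
    thus ?thesis by (rule dual_code_sum_hyperplane_vectors[OF c _ False])
  qed
  finally show "(\<Sum>P\<in>hyperplane n u. projected_word n w r c P) = 0" .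
qed

lemma projected_word_supp:
  fixes c :: "(nat \<Rightarrow> 'a::{finite,field}) set \<Rightarrow> 'a"
  assumes c: "c \<in> pg_dual_code n" and r: "r \<in> pg_vecs n"
  shows "pg_supp n (projected_word n w r c) \<subseteq> proj_point n w r ` pg_supp n c"
proof
  fix P assume P: "P \<in> pg_supp n (projected_word n w r c)"
  hence Pp: "P \<in> pg_points n"
    and "(\<Sum>v\<in>{v \<in> pg_vecs n. proj n w r v \<in> P}. c (pg_point v)) \<noteq> 0"
    by (auto simp: pg_supp_def projected_word_def)
  then obtain v where v: "v \<in> pg_vecs n" "proj n w r v \<in> P" "c (pg_point v) \<noteq> 0"
    by (metis (mono_tags, lifting) mem_Collect_eq sum.neutral)
  have "P = proj_point n w r (pg_point v)"
    using point_eq_of_mem[OF Pp v(2)] by (simp add: proj_point_pg_point)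
  moreover have "pg_point v \<in> pg_supp n c" using pg_point_in_supp[OF c v(1,3)] .
  ultimately show "P \<in> proj_point n w r ` pg_supp n c" by blast
qed

lemma projected_word_weight_less:
  fixes c :: "(nat \<Rightarrow> 'a::{finite,field}) set \<Rightarrow> 'a"
  assumes c: "c \<in> pg_dual_code n" and r: "r \<in> pg_vecs n"
    and A: "A1 \<in> pg_supp n c" "A2 \<in> pg_supp n c" "A1 \<noteq> A2"
    and same_image: "proj_point n w r A1 = proj_point n w r A2"
  shows "pg_weight n (projected_word n w r c) < pg_weight n c"
proof -
  have "proj_point n w r ` pg_supp n c = proj_point n w r ` (pg_supp n c - {A2})"
  proof (intro equalityI subsetI)
    fix Q assume "Q \<in> proj_point n w r ` pg_supp n c"
    then obtain A where "A \<in> pg_supp n c" "Q = proj_point n w r A" by blast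
    thus "Q \<in> proj_point n w r ` (pg_supp n c - {A2})"
      using A same_image by (cases "A = A2") auto
  qed auto
  also have "card \<dots> \<le> card (pg_supp n c - {A2})" by (rule card_image_le) (simp add: finite_supp)
  also have "\<dots> < card (pg_supp n c)" using A(2) finite_supp by (rule card_Diff1_less[rotated])
  finally have "card (proj_point n w r ` pg_supp n c) < card (pg_supp n c)" .
  moreover have "card (pg_supp n (projected_word n w r c)) \<le> card (proj_point n w r ` pg_supp n c)"
    by (rule card_mono[OF finite_imageI[OF finite_supp] projected_word_supp[OF c r]])
  ultimately show ?thesis by (simp add: pg_weight_def)
qed

text \<open>If the line joining <r> and <b> meets the support of c only in <b>, then the
  projected word takes the value (q - 1) c(<b>) = -c(<b>) at the image of <b>.\<close>

lemma projected_word_nonzero: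
  fixes c :: "(nat \<Rightarrow> 'a::{finite,field}) set \<Rightarrow> 'a"
  assumes c: "c \<in> pg_dual_code n" and r: "r \<in> pg_vecs n" and wr: "pg_dot n w r = 1"
    and cr: "c (pg_point r) = 0" and b: "b \<in> pg_vecs n" and cb: "c (pg_point b) \<noteq> 0"
    and line: "\<And>s. s \<noteq> 0 \<Longrightarrow> c (pg_point (\<lambda>i. b i + s * r i)) = 0"
  shows "pg_supp n (projected_word n w r c) \<noteq> {}"
proof -
  have pb0: "proj n w r b \<noteq> (\<lambda>i. 0)" using vanish_on_proj_kernel[OF c cr] cb by blast
  define P0 where "P0 = pg_point (proj n w r b)"
  have P0: "P0 \<in> pg_points n" unfolding P0_def using pb0 proj_vecs[OF b r] by (simp add: pg_point_in_points)
  have b0: "b \<noteq> (\<lambda>i. 0)" using cb dual_code_zero_point[OF c] by metis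
  let ?T = "{v \<in> pg_vecs n. proj n w r v \<in> P0}"
  have sub: "pg_point b \<subseteq> ?T"
  proof
    fix v assume "v \<in> pg_point b"
    then obtain a where a: "a \<noteq> 0" "v = smul a b" by (auto simp: mem_pg_point)
    hence "proj n w r v \<in> P0" unfolding P0_def mem_pg_point by (auto simp: proj_smul)
    thus "v \<in> ?T" using a b by simp
  qed
  have off_b: "c (pg_point v) = 0" if v: "v \<in> ?T - pg_point b" for v
  proof -
    obtain a where a: "a \<noteq> 0" "proj n w r v = smul a (proj n w r b)"
      using v by (auto simp: P0_def mem_pg_point)
    define s where "s = pg_dot n w v - a * pg_dot n w b"
    have ve: "v = (\<lambda>i. a * b i + s * r i)"
    proof
      fix i
      have "proj n w r v i = a * proj n w r b i" using a(2) by simp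
      thus "v i = a * b i + s * r i" by (simp add: proj_def s_def algebra_simps)
    qed
    have "s \<noteq> 0"
    proof
      assume "s = 0"
      hence "v = smul a b" using ve by (simp add: fun_eq_iff)
      thus False using v a(1) by (auto simp: mem_pg_point)
    qed
    moreover have "v = smul a (\<lambda>i. b i + (s / a) * r i)"
      using ve a(1) by (simp add: fun_eq_iff algebra_simps)
    hence "pg_point v = pg_point (\<lambda>i. b i + (s / a) * r i)"
      using a(1) by (simp add: pg_point_smul)
    ultimately show ?thesis using line[of "s / a"] a(1) by simp
  qed
  have "projected_word n w r c P0 = (\<Sum>v\<in>?T. c (pg_point v))"
    using P0 by (simp add: projected_word_def)
  also have "\<dots> = (\<Sum>v\<in>pg_point b. c (pg_point v))"
    by (rule sum.mono_neutral_right[OF finite_subset[OF _ finite_vecs] sub]) (use off_b in auto)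
  also have "\<dots> = (\<Sum>v\<in>pg_point b. c (pg_point b))"
    by (rule sum.cong) (simp_all add: pg_point_eq_iff[symmetric])
  also have "\<dots> = - c (pg_point b)" using card_point[OF b0] card_UNIV_minus_1[where 'a='a] by simp
  finally have "projected_word n w r c P0 \<noteq> 0" using cb by simp
  thus ?thesis using P0 by (auto simp: pg_supp_def)
qed

text \<open>Projecting from <r>
  identifies <x> and <y>, so the projected word is a nonzero dual codeword of smaller
  weight.\<close>

lemma shorter_codeword:
  fixes c :: "(nat \<Rightarrow> 'a::{finite,field}) set \<Rightarrow> 'a"
  assumes c: "c \<in> pg_dual_code n" and n: "n \<ge> 1"
    and vecs: "x \<in> pg_vecs n" "y \<in> pg_vecs n" "b \<in> pg_vecs n"
    and supp: "c (pg_point x) \<noteq> 0" "c (pg_point y) \<noteq> 0" "c (pg_point b) \<noteq> 0"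
    and xy: "pg_point x \<noteq> pg_point y" and t: "t \<noteq> 0"
    and empty_line: "\<And>g. c (pg_point (\<lambda>i. x i + t * y i + g * b i)) = 0"
  shows "\<exists>c'\<in>pg_dual_code n. pg_supp n (c' :: (nat \<Rightarrow> 'a) set \<Rightarrow> 'a) \<noteq> {} \<and>
                                  pg_weight n c' < pg_weight n c"
proof -
  define r where "r = (\<lambda>i. x i + t * y i)"
  have rV: "r \<in> pg_vecs n" using vecs by (simp add: r_def pg_vecs_def)
  have cr: "c (pg_point r) = 0" using empty_line[of 0] by (simp add: r_def)
  have "r \<noteq> (\<lambda>i. 0)"
  proof
    assume "r = (\<lambda>i. 0)"
    hence "x = smul (- t) y" by (simp add: r_def fun_eq_iff add_eq_0_iff)
    thus False using xy t pg_point_smul[of "- t" y] by (metis neg_equal_0_iff_equal)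
  qed
  then obtain j where j: "r j \<noteq> 0" by auto
  have jn: "j \<le> n" using j rV by (auto simp: pg_vecs_def) (meson not_le)
  text \<open>A linear form w with w.r = 1, selecting the j-th coordinate.\<close>
  define w where "w = (\<lambda>i. if i = j then 1 / r j else (0::'a))"
  have wV: "w \<in> pg_vecs n" using jn by (auto simp: w_def pg_vecs_def)
  have wr: "pg_dot n w r = 1" using j dot_unit[OF jn, of "1 / r j" r] by (simp add: w_def)
  have "proj n w r x = smul (- t) (proj n w r y)"
  proof
    fix i
    have wx: "pg_dot n w x = 1 - t * pg_dot n w y" using wr dot_lin[of n w x t y] by (simp add: r_def eq_diff_eq)
    show "proj n w r x i = smul (- t) (proj n w r y) i"
      unfolding proj_def smul_apply r_def by (simp add: wx algebra_simps)
  qed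
  hence same_image: "proj_point n w r (pg_point x) = proj_point n w r (pg_point y)"
    using t pg_point_smul[of "- t" "proj n w r y"] by (simp only: proj_point_pg_point neg_equal_0_iff_equal not_False_eq_True simp_thms)
  have "pg_point x \<in> pg_supp n c" "pg_point y \<in> pg_supp n c"
    using pg_point_in_supp[OF c] vecs supp by blast+
  hence smaller: "pg_weight n (projected_word n w r c) < pg_weight n c"
    by (intro projected_word_weight_less[OF c rV _ _ xy same_image])
  have "c (pg_point (\<lambda>i. b i + s * r i)) = 0" if "s \<noteq> 0" for s
  proof -
    have "(\<lambda>i. b i + s * r i) = smul s (\<lambda>i. x i + t * y i + (1 / s) * b i)"
      using that by (simp add: r_def fun_eq_iff algebra_simps)
    hence "pg_point (\<lambda>i. b i + s * r i) = pg_point (\<lambda>i. x i + t * y i + (1 / s) * b i)"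
      by (simp only: pg_point_smul[OF that])
    thus ?thesis using empty_line[of "1 / s"] by (simp only:)
  qed
  hence nonzero: "pg_supp n (projected_word n w r c) \<noteq> {}"
    by (rule projected_word_nonzero[OF c rV wr cr vecs(3) supp(3)])
  have "projected_word n w r c \<in> pg_dual_code n"
    by (rule projected_word_dual[OF c n rV wV cr])
  thus ?thesis using nonzero smaller by blast
qed

subsection \<open>A dual codeword of weight at most 2q\<close>

text \<open>The vectors supported on the coordinates 0 and j: the 2-space spanned by e_0 and e_j,
  i.e. a line of PG(n,q) through the point <e_0>.\<close>

definition axis_span :: "nat \<Rightarrow> (nat \<Rightarrow> 'a::field) set" where
  "axis_span j = {v. \<forall>i. i \<noteq> 0 \<longrightarrow> i \<noteq> j \<longrightarrow> v i = 0}"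

lemma pg_point_subset_axis_span: "pg_point v \<subseteq> axis_span j \<longleftrightarrow> v \<in> axis_span j"
proof
  assume "v \<in> axis_span j"
  thus "pg_point v \<subseteq> axis_span j" by (auto simp: axis_span_def mem_pg_point)
qed (use pg_point_self in blast)

text \<open>Every hyperplane meets such a 2-space in q or q^2 vectors; in both cases the
  number is 0 in F_q.\<close>

lemma card_solutions_linear_eq:
  fixes x y :: "'a::{finite,field}"
  shows "of_nat (card {(a,b). a * x + b * y = 0}) = (0::'a)"
proof -
  let ?q = "card (UNIV::'a set)"
  have "card {(a,b). a * x + b * y = 0} = ?q \<or> card {(a,b). a * x + b * y = (0::'a)} = ?q * ?q"
  proof (cases "y = 0")
    case False
    have "{(a,b). a * x + b * y = 0} = (\<lambda>a. (a, - a * x / y)) ` UNIV"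
      using False by (auto simp: field_simps add_eq_0_iff image_iff)
    moreover have "inj (\<lambda>a::'a. (a, - a * x / y))" by (rule injI) simp
    ultimately show ?thesis by (simp add: card_image)
  next
    case True
    show ?thesis
    proof (cases "x = 0")
      case False
      have "{(a,b). a * x + b * y = 0} = (\<lambda>b. (0, b)) ` UNIV"
        using False True by (auto simp: image_iff)
      moreover have "inj (\<lambda>b::'a. (0::'a, b))" by (rule injI) simp
      ultimately show ?thesis by (simp add: card_image)
    next
      case False': True
      hence "{(a,b). a * x + b * y = 0} = (UNIV :: ('a \<times> 'a) set)" using True by auto
      thus ?thesis by (simp add: card_cartesian_product[symmetric])
    qed
  qed
  thus ?thesis using card_UNIV_eq_0[where 'a='a] by auto
qed

lemma card_hyperplane_inter_axis_span:
  fixes u :: "nat \<Rightarrow> 'a::{finite,field}"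
  assumes j: "j \<noteq> 0" "j \<le> n"
  shows "of_nat (card {v \<in> pg_vecs n. pg_dot n u v = 0 \<and> v \<in> axis_span j}) = (0::'a)"
proof -
  define \<phi> where "\<phi> = (\<lambda>(a::'a,b::'a). (\<lambda>i::nat. if i = 0 then a else if i = j then b else 0))"
  have inj: "inj \<phi>" unfolding \<phi>_def
    by (rule injI) (auto simp: fun_eq_iff split: prod.splits, metis assms(1), metis assms(1))
  have dot: "pg_dot n u (\<phi> (a,b)) = a * u 0 + b * u j" for a b
    unfolding \<phi>_def using dot_two[of 0 j n a b u] j by (simp add: dot_comm)
  have "{v \<in> pg_vecs n. pg_dot n u v = 0 \<and> v \<in> axis_span j} = \<phi> ` {(a,b). a * u 0 + b * u j = 0}"
  proof (intro equalityI subsetI)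
    fix v assume v: "v \<in> {v \<in> pg_vecs n. pg_dot n u v = 0 \<and> v \<in> axis_span j}"
    have "v = \<phi> (v 0, v j)" using v unfolding \<phi>_def axis_span_def by (auto simp: fun_eq_iff)
    thus "v \<in> \<phi> ` {(a,b). a * u 0 + b * u j = 0}" using v dot[of "v 0" "v j"] by force
  next
    fix v assume "v \<in> \<phi> ` {(a,b). a * u 0 + b * u j = 0}"
    then obtain a b where "a * u 0 + b * u j = 0" "v = \<phi> (a,b)" by auto
    thus "v \<in> {v \<in> pg_vecs n. pg_dot n u v = 0 \<and> v \<in> axis_span j}"
      using j dot by (auto simp: \<phi>_def pg_vecs_def axis_span_def)
  qed
  thus ?thesis
    using card_solutions_linear_eq[of "u 0" "u j"] card_image[OF inj_on_subset[OF inj]] by simp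
qed

definition two_lines_word :: "nat \<Rightarrow> (nat \<Rightarrow> 'a::field) set \<Rightarrow> 'a" where
  "two_lines_word n P = (if P \<in> pg_points n
     then (if P \<subseteq> axis_span 1 then 1 else 0) - (if P \<subseteq> axis_span 2 then 1 else 0) else 0)"

lemma two_lines_word_pg_point:
  "v \<in> pg_vecs n \<Longrightarrow> v \<noteq> (\<lambda>i. 0) \<Longrightarrow>
   two_lines_word n (pg_point v) = (if v \<in> axis_span 1 then 1 else 0) - (if v \<in> axis_span 2 then 1 else 0)"
  by (simp add: two_lines_word_def pg_point_in_points pg_point_subset_axis_span)

lemma two_lines_word_dual:
  assumes n: "n \<ge> 2"
  shows "(two_lines_word n :: (nat \<Rightarrow> 'a::{finite,field}) set \<Rightarrow> 'a) \<in> pg_dual_code n"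
  unfolding dual_code_iff
proof (intro conjI allI impI ballI)
  fix P :: "(nat \<Rightarrow> 'a) set"
  show "two_lines_word n P \<in> prime_field"
    unfolding two_lines_word_def using prime_field_0 prime_field_1 prime_field_minus_1 by auto
  show "P \<notin> pg_points n \<Longrightarrow> two_lines_word n P = 0" by (simp add: two_lines_word_def)
next
  fix u :: "nat \<Rightarrow> 'a" assume u: "u \<in> pg_vecs n" "u \<noteq> (\<lambda>i. 0)"
  define h :: "(nat \<Rightarrow> 'a) \<Rightarrow> 'a" where
    "h v = (if v \<in> axis_span 1 then 1 else 0) - (if v \<in> axis_span 2 then 1 else 0)" for v
  let ?S = "{v \<in> pg_vecs n. pg_dot n u v = (0::'a)}"
  have fS: "finite ?S" by (rule finite_subset[OF _ finite_vecs]) auto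
  have "(\<Sum>v\<in>?S. h v) = of_nat (card {v\<in>?S. v \<in> axis_span 1}) - of_nat (card {v\<in>?S. v \<in> axis_span 2})"
    unfolding h_def by (simp add: sum_subtractf sum.inter_filter[OF fS, symmetric])
  also have "\<dots> = 0"
    using card_hyperplane_inter_axis_span[of 1 n u] card_hyperplane_inter_axis_span[of 2 n u] n
    by (simp add: conj_ac)
  finally have "(\<Sum>v\<in>?S. h v) = 0" .
  moreover have "(\<Sum>v\<in>?S. h v) = (\<Sum>v\<in>{v \<in> pg_vecs n. v \<noteq> (\<lambda>i. 0) \<and> pg_dot n u v = 0}. h v)"
    by (rule sum.mono_neutral_right[OF fS]) (auto simp: h_def axis_span_def)
  ultimately have "(\<Sum>v\<in>{v \<in> pg_vecs n. v \<noteq> (\<lambda>i. 0) \<and> pg_dot n u v = 0}. two_lines_word n (pg_point v)) = 0"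
    by (simp add: two_lines_word_pg_point h_def)
  hence "of_nat (card (UNIV::'a set) - 1) * (\<Sum>P\<in>hyperplane n u. two_lines_word n P) = 0"
    by (simp add: sum_hyperplane_vectors)
  thus "(\<Sum>P\<in>hyperplane n u. two_lines_word n P) = (0::'a)"
    using card_UNIV_minus_1[where 'a='a] by simp
qed

lemma two_lines_word_nonzero:
  assumes n: "n \<ge> 2"
  shows "pg_supp n (two_lines_word n :: (nat \<Rightarrow> 'a::{finite,field}) set \<Rightarrow> 'a) \<noteq> {}"
proof -
  let ?e = "(\<lambda>i. if i = 1 then 1 else 0) :: nat \<Rightarrow> 'a"
  have e: "?e \<in> pg_vecs n" "?e \<noteq> (\<lambda>i. 0)" using n by (auto simp: pg_vecs_def fun_eq_iff)
  have "two_lines_word n (pg_point ?e) = 1"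
    using two_lines_word_pg_point[OF e] by (simp add: axis_span_def)
  thus ?thesis using pg_point_in_points[OF e] by (auto simp: pg_supp_def)
qed

lemma axis_span_point:
  assumes "v \<in> axis_span j" "v j \<noteq> 0" "j \<noteq> 0"
  shows "pg_point v = pg_point (\<lambda>i. if i = 0 then v 0 / v j else if i = j then 1 else 0)"
proof -
  have "v = smul (v j) (\<lambda>i. if i = 0 then v 0 / v j else if i = j then 1 else 0)"
    using assms by (auto simp: fun_eq_iff axis_span_def)
  thus ?thesis using pg_point_smul[OF assms(2)] by metis
qed

lemma two_lines_word_weight:
  "pg_weight n (two_lines_word n :: (nat \<Rightarrow> 'a::{finite,field}) set \<Rightarrow> 'a) \<le> 2 * card (UNIV::'a set)"
proof -
  define f where "f j t = pg_point (\<lambda>i. if i = 0 then t else if i = j then 1 else (0::'a))" for j t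
  have "pg_supp n (two_lines_word n :: (nat \<Rightarrow> 'a) set \<Rightarrow> 'a) \<subseteq> range (f 1) \<union> range (f 2)"
  proof
    fix P assume "P \<in> pg_supp n (two_lines_word n :: (nat \<Rightarrow> 'a) set \<Rightarrow> 'a)"
    then obtain v where v: "v \<in> pg_vecs n" "v \<noteq> (\<lambda>i. 0)" "P = pg_point v"
      and val: "(if v \<in> axis_span 1 then 1 else 0) - (if v \<in> axis_span 2 then 1 else 0) \<noteq> (0::'a)"
      by (auto simp: pg_supp_def pg_points_iff two_lines_word_pg_point)
    text \<open>v lies in exactly one of the two 2-spaces, hence off their intersection span(e_0).\<close>
    show "P \<in> range (f 1) \<union> range (f 2)"
    proof (cases "v \<in> axis_span 1")
      case True
      with val have "v \<notin> axis_span 2" by auto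
      with True have "v 1 \<noteq> 0" by (auto simp: axis_span_def)
      hence "P = f 1 (v 0 / v 1)" unfolding f_def v(3) by (rule axis_span_point[OF True]) simp
      thus ?thesis by blast
    next
      case False
      with val have L2: "v \<in> axis_span 2" by (auto split: if_splits)
      with False have "v 2 \<noteq> 0" by (auto simp: axis_span_def)
      hence "P = f 2 (v 0 / v 2)" unfolding f_def v(3) by (rule axis_span_point[OF L2]) simp
      thus ?thesis by blast
    qed
  qed
  hence "card (pg_supp n (two_lines_word n :: (nat \<Rightarrow> 'a) set \<Rightarrow> 'a)) \<le> card (range (f 1) \<union> range (f 2))"
    by (rule card_mono[rotated]) simp
  also have "\<dots> \<le> card (range (f 1)) + card (range (f 2))" by (rule card_Un_le)
  also have "\<dots> \<le> card (UNIV::'a set) + card (UNIV::'a set)" by (intro add_mono card_image_le) simp_all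
  finally show ?thesis by (simp add: pg_weight_def)
qed

subsection \<open>Four independent support points force a shorter codeword\<close>

text \<open>Normalised coefficients (with respect to a1, a2, a3) of the points of the lines
  a1a2, a1a3, a2a3 other than <a1>, <a2>, <a3>: (1,t,0), (1,0,t), (0,1,t) for t \<noteq> 0.\<close>

definition centre_coeffs :: "nat \<Rightarrow> 'a \<Rightarrow> 'a \<times> 'a \<times> 'a::field" where
  "centre_coeffs k t = (if k = 0 then (1, t, 0) else if k = 1 then (1, 0, t) else (0, 1, t))"

lemma centre_coeffs_proportional:
  assumes "k < 3" "k' < 3" "t \<noteq> 0" "t' \<noteq> 0"
    and "centre_coeffs k' t' = (l * fst (centre_coeffs k t), l * fst (snd (centre_coeffs k t)),
                                l * snd (snd (centre_coeffs k t)))"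
  shows "k = k' \<and> t = t'"
proof -
  have "k \<in> {0, 1, 2}" "k' \<in> {0, 1, 2}" using assms(1,2) by auto
  thus ?thesis using assms(3-5) by (auto simp: centre_coeffs_def)
qed

lemma centre_coeffs_two_nonzero:
  assumes "k < 3" "t \<noteq> 0"
  shows "(fst (centre_coeffs k t) \<noteq> 0 \<or> fst (snd (centre_coeffs k t)) \<noteq> 0)
       \<and> (fst (centre_coeffs k t) \<noteq> 0 \<or> snd (snd (centre_coeffs k t)) \<noteq> 0)
       \<and> (fst (snd (centre_coeffs k t)) \<noteq> 0 \<or> snd (snd (centre_coeffs k t)) \<noteq> 0)"
  using assms by (auto simp: centre_coeffs_def)

locale independent_quadruple =
  fixes a1 a2 a3 b :: "nat \<Rightarrow> 'a::{finite,field}"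
  assumes independent: "\<And>x1 x2 x3 x4. (\<lambda>i. x1 * a1 i + x2 * a2 i + x3 * a3 i + x4 * b i) = (\<lambda>i. 0) \<Longrightarrow>
                          x1 = 0 \<and> x2 = 0 \<and> x3 = 0 \<and> x4 = 0"
begin

text \<open>The vector s1 a1 + s2 a2 + s3 a3 + g b; for fixed s and varying g these are the
  points of the line joining <s1 a1 + s2 a2 + s3 a3> and <b>, except <b>.\<close>

definition comb :: "'a \<times> 'a \<times> 'a \<Rightarrow> 'a \<Rightarrow> nat \<Rightarrow> 'a" where
  "comb s g = (\<lambda>i. fst s * a1 i + fst (snd s) * a2 i + snd (snd s) * a3 i + g * b i)"

lemma comb_basis: "comb (1, 0, 0) 0 = a1" "comb (0, 1, 0) 0 = a2" "comb (0, 0, 1) 0 = a3"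
  "comb (0, 0, 0) 1 = b"
  by (simp_all add: comb_def)

lemma pg_point_comb_eq:
  assumes "pg_point (comb s g) = pg_point (comb s' g')"
  shows "\<exists>l. l \<noteq> 0 \<and> s' = (l * fst s, l * fst (snd s), l * snd (snd s)) \<and> g' = l * g"
proof -
  have "comb s' g' \<in> pg_point (comb s g)" using assms pg_point_eq_iff by blast
  then obtain l where l: "l \<noteq> 0" "comb s' g' = smul l (comb s g)"
    unfolding mem_pg_point by blast
  have "(\<lambda>i. (fst s' - l * fst s) * a1 i + (fst (snd s') - l * fst (snd s)) * a2 i
           + (snd (snd s') - l * snd (snd s)) * a3 i + (g' - l * g) * b i) = (\<lambda>i. 0)"
  proof
    fix i
    have "(fst s' - l * fst s) * a1 i + (fst (snd s') - l * fst (snd s)) * a2 i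
           + (snd (snd s') - l * snd (snd s)) * a3 i + (g' - l * g) * b i
          = comb s' g' i - l * comb s g i"
      by (simp add: comb_def algebra_simps)
    also have "\<dots> = 0" by (simp only: l(2) smul_apply diff_self)
    finally show "(fst s' - l * fst s) * a1 i + (fst (snd s') - l * fst (snd s)) * a2 i
           + (snd (snd s') - l * snd (snd s)) * a3 i + (g' - l * g) * b i = 0" .
  qed
  from independent[OF this] l(1) show ?thesis by (intro exI[of _ l]) (simp add: prod_eq_iff)
qed

lemma comb_zero_pattern:
  assumes "pg_point (comb s g) = pg_point (comb s' g')"
  shows "(fst s = 0 \<longleftrightarrow> fst s' = 0) \<and> (fst (snd s) = 0 \<longleftrightarrow> fst (snd s') = 0) \<and>
         (snd (snd s) = 0 \<longleftrightarrow> snd (snd s') = 0) \<and> (g = 0 \<longleftrightarrow> g' = 0)"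
  using pg_point_comb_eq[OF assms] by auto

lemma distinct_basis_points:
  "distinct [pg_point a1, pg_point a2, pg_point a3, pg_point b]"
  using comb_zero_pattern[of "(1,0,0)" 0 "(0,1,0)" 0] comb_zero_pattern[of "(1,0,0)" 0 "(0,0,1)" 0]
    comb_zero_pattern[of "(1,0,0)" 0 "(0,0,0)" 1] comb_zero_pattern[of "(0,1,0)" 0 "(0,0,1)" 0]
    comb_zero_pattern[of "(0,1,0)" 0 "(0,0,0)" 1] comb_zero_pattern[of "(0,0,1)" 0 "(0,0,0)" 1]
  by (simp add: comb_basis) blast

lemma comb_centre_not_basis_point:
  assumes "k < 3" "t \<noteq> 0"
  shows "pg_point (comb (centre_coeffs k t) g) \<notin> {pg_point a1, pg_point a2, pg_point a3, pg_point b}"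
  using centre_coeffs_two_nonzero[OF assms]
    comb_zero_pattern[of "centre_coeffs k t" g "(1,0,0)" 0] comb_zero_pattern[of "centre_coeffs k t" g "(0,1,0)" 0]
    comb_zero_pattern[of "centre_coeffs k t" g "(0,0,1)" 0] comb_zero_pattern[of "centre_coeffs k t" g "(0,0,0)" 1]
  by (simp add: comb_basis) blast

text \<open>Counting: if a point set S of size at most 2q contains <a1>, <a2>, <a3>, <b>, then
  some line joining <b> to a point with normalised coefficients misses S (except for <b>),
  since otherwise S would contain 4 + 3(q - 1) > 2q points.\<close>

lemma line_missing_set:
  assumes fin: "finite S"
    and basis: "{pg_point a1, pg_point a2, pg_point a3, pg_point b} \<subseteq> S"
    and small: "card S \<le> 2 * card (UNIV::'a set)"
  shows "\<exists>k<3. \<exists>t\<noteq>0. \<forall>g. pg_point (comb (centre_coeffs k t) g) \<notin> S"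
proof (rule ccontr)
  let ?I = "{..<3::nat} \<times> (UNIV - {0::'a})"
  assume "\<not> ?thesis"
  hence "\<forall>p\<in>?I. \<exists>g. pg_point (comb (centre_coeffs (fst p) (snd p)) g) \<in> S" by force
  from bchoice[OF this] obtain gs
    where gs: "\<forall>p\<in>?I. pg_point (comb (centre_coeffs (fst p) (snd p)) (gs p)) \<in> S" by blast
  let ?Q = "{pg_point a1, pg_point a2, pg_point a3, pg_point b}"
  let ?F = "\<lambda>p. pg_point (comb (centre_coeffs (fst p) (snd p)) (gs p))"
  have "inj_on ?F ?I"
  proof (rule inj_onI)
    fix p p' assume p: "p \<in> ?I" "p' \<in> ?I" and "?F p = ?F p'"
    then obtain l where "centre_coeffs (fst p') (snd p') = (l * fst (centre_coeffs (fst p) (snd p)),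
        l * fst (snd (centre_coeffs (fst p) (snd p))), l * snd (snd (centre_coeffs (fst p) (snd p))))"
      using pg_point_comb_eq by blast
    with p show "p = p'" using centre_coeffs_proportional[of "fst p" "fst p'" "snd p" "snd p'" l]
      by (auto simp: prod_eq_iff)
  qed
  moreover have "?F ` ?I \<subseteq> S - ?Q"
  proof (rule image_subsetI)
    fix p assume p: "p \<in> ?I"
    hence "fst p < 3" "snd p \<noteq> 0" by (auto simp: mem_Times_iff)
    thus "?F p \<in> S - ?Q" using gs p comb_centre_not_basis_point[of "fst p" "snd p"] by blast
  qed
  ultimately have "card ?I \<le> card (S - ?Q)"
    by (rule card_inj_on_le[OF _ _ finite_Diff[OF fin]])
  also have "card (S - ?Q) = card S - 4"
    using basis distinct_basis_points fin by (simp add: card_Diff_subset)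
  finally have "3 * (card (UNIV::'a set) - 1) \<le> card S - 4"
    by (simp add: card_cartesian_product card_Diff_singleton)
  thus False using small card_UNIV_ge_2[where 'a='a] by linarith
qed

lemma comb_centre:
  assumes "k < 3"
  obtains x y where "x \<in> {a1, a2, a3}" "y \<in> {a1, a2, a3}" "pg_point x \<noteq> pg_point y"
    "\<And>g. comb (centre_coeffs k t) g = (\<lambda>i. x i + t * y i + g * b i)"
proof -
  have d: "pg_point a1 \<noteq> pg_point a2" "pg_point a1 \<noteq> pg_point a3" "pg_point a2 \<noteq> pg_point a3"
    using distinct_basis_points by auto
  consider "k = 0" | "k = 1" | "k = 2" using assms by linarith
  thus ?thesis
  proof cases
    case 1
    show ?thesis by (rule that[of a1 a2]) (use 1 d in \<open>simp_all add: comb_def centre_coeffs_def\<close>)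
  next
    case 2
    show ?thesis by (rule that[of a1 a3]) (use 2 d in \<open>simp_all add: comb_def centre_coeffs_def\<close>)
  next
    case 3
    show ?thesis by (rule that[of a2 a3]) (use 3 d in \<open>simp_all add: comb_def centre_coeffs_def\<close>)
  qed
qed

theorem shorter_codeword_of_independent_support:
  fixes c :: "(nat \<Rightarrow> 'a) set \<Rightarrow> 'a"
  assumes c: "c \<in> pg_dual_code n" and n: "n \<ge> 1"
    and vecs: "a1 \<in> pg_vecs n" "a2 \<in> pg_vecs n" "a3 \<in> pg_vecs n" "b \<in> pg_vecs n"
    and supp: "c (pg_point a1) \<noteq> 0" "c (pg_point a2) \<noteq> 0" "c (pg_point a3) \<noteq> 0" "c (pg_point b) \<noteq> 0"
    and small: "pg_weight n c \<le> 2 * card (UNIV::'a set)"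
  shows "\<exists>c'\<in>pg_dual_code n. pg_supp n (c' :: (nat \<Rightarrow> 'a) set \<Rightarrow> 'a) \<noteq> {} \<and>
                                  pg_weight n c' < pg_weight n c"
proof -
  have "{pg_point a1, pg_point a2, pg_point a3, pg_point b} \<subseteq> pg_supp n c"
    using pg_point_in_supp[OF c] vecs supp by blast
  then obtain k t where k: "k < 3" and t: "t \<noteq> 0"
    and missing: "\<And>g. pg_point (comb (centre_coeffs k t) g) \<notin> pg_supp n c"
    using line_missing_set[OF finite_supp _ small[unfolded pg_weight_def]] by blast
  obtain x y where xy: "x \<in> {a1, a2, a3}" "y \<in> {a1, a2, a3}" "pg_point x \<noteq> pg_point y"
    and line: "\<And>g. comb (centre_coeffs k t) g = (\<lambda>i. x i + t * y i + g * b i)"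
    using comb_centre[OF k] by blast
  have "comb (centre_coeffs k t) g \<in> pg_vecs n" for g using vecs by (simp add: comb_def pg_vecs_def)
  hence "c (pg_point (\<lambda>i. x i + t * y i + g * b i)) = 0" for g
    using missing[of g] pg_point_in_supp[OF c] line by metis
  moreover have "x \<in> pg_vecs n" "y \<in> pg_vecs n" "c (pg_point x) \<noteq> 0" "c (pg_point y) \<noteq> 0"
    using xy vecs supp by auto
  ultimately show ?thesis
    using shorter_codeword[OF c n _ _ vecs(4) _ _ supp(4) xy(3) t] by blast
qed

end

subsection \<open>Supports of rank at most three lie in a plane\<close>

lemma sum_apply: "(\<Sum>x\<in>A. f x) i = (\<Sum>x\<in>A. f x i)"
  by (induction A rule: infinite_finite_induct) auto

definition unit_vec :: "nat \<Rightarrow> nat \<Rightarrow> 'a::field" where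
  "unit_vec k = (\<lambda>i. if i = k then 1 else 0)"

lemma unit_vec_vecs: "k \<le> n \<Longrightarrow> unit_vec k \<in> pg_vecs n"
  by (simp add: unit_vec_def pg_vecs_def)

lemma inj_unit_vec: "inj (unit_vec :: nat \<Rightarrow> nat \<Rightarrow> 'a::field)"
  by (rule injI) (metis unit_vec_def one_neq_zero)

lemma independent_unit_vecs: "vec.independent ((unit_vec :: nat \<Rightarrow> nat \<Rightarrow> 'a::field) ` {..n})"
proof
  assume "vec.dependent ((unit_vec :: nat \<Rightarrow> nat \<Rightarrow> 'a) ` {..n})"
  then obtain u where u: "\<exists>v\<in>unit_vec ` {..n}. u v \<noteq> 0"
    "(\<Sum>v\<in>unit_vec ` {..n}. smul (u v) v) = (0::nat \<Rightarrow> 'a)"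
    using vec.dependent_finite[of "unit_vec ` {..n}"] by auto
  then obtain j where j: "j \<le> n" "u (unit_vec j) \<noteq> 0" by auto
  have "0 = (\<Sum>v\<in>unit_vec ` {..n}. smul (u v) v) j" using u(2) by simp
  also have "\<dots> = (\<Sum>i\<le>n. u (unit_vec i) * unit_vec i j)"
    by (simp add: sum.reindex inj_on_subset[OF inj_unit_vec] sum_apply)
  also have "\<dots> = u (unit_vec j)"
    using j(1) by (simp add: unit_vec_def if_distrib cong: if_cong)
  finally show False using j(2) by simp
qed

lemma independent_extend:
  assumes "B \<subseteq> pg_vecs n" "vec.independent B" "card B \<le> m" "m \<le> Suc n"
  shows "\<exists>B'. B \<subseteq> B' \<and> B' \<subseteq> pg_vecs n \<and> vec.independent B' \<and>
             card (B' :: (nat \<Rightarrow> 'a::{finite,field}) set) = m"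
  using assms
proof (induction "m - card B" arbitrary: B)
  case 0
  thus ?case by (intro exI[of _ B]) simp
next
  case (Suc k)
  have fin: "finite B" using Suc.prems(1) finite_vecs finite_subset by blast
  have "\<exists>x\<in>pg_vecs n. x \<notin> vec.span B"
  proof (rule ccontr)
    assume "\<not> ?thesis"
    hence "unit_vec ` {..n} \<subseteq> vec.span B" using unit_vec_vecs by blast
    hence "card ((unit_vec :: nat \<Rightarrow> nat \<Rightarrow> 'a) ` {..n}) \<le> card B"
      using vec.independent_span_bound[OF fin independent_unit_vecs] by blast
    moreover have "card ((unit_vec :: nat \<Rightarrow> nat \<Rightarrow> 'a) ` {..n}) = Suc n"
      by (simp add: card_image inj_on_subset[OF inj_unit_vec])
    ultimately show False using Suc.hyps(2) Suc.prems(4) by linarith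
  qed
  then obtain x where x: "x \<in> pg_vecs n" "x \<notin> vec.span B" by blast
  have "x \<notin> B" using x(2) vec.span_base by blast
  hence card_x: "card (insert x B) = Suc (card B)" using fin by simp
  have "\<exists>B'. insert x B \<subseteq> B' \<and> B' \<subseteq> pg_vecs n \<and> vec.independent B' \<and> card B' = m"
    by (rule Suc.hyps(1))
      (use Suc.hyps(2) Suc.prems x card_x vec.independent_insertI[OF x(2) Suc.prems(2)] in auto)
  thus ?case by blast
qed

lemma plane_of_independent:
  fixes u1 u2 u3 :: "nat \<Rightarrow> 'a::{finite,field}"
  assumes distinct: "u1 \<noteq> u2" "u2 \<noteq> u3" "u1 \<noteq> u3" and vecs: "{u1, u2, u3} \<subseteq> pg_vecs n"
    and ind: "vec.independent {u1, u2, u3}"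
  shows "{P \<in> pg_points n. \<exists>a b d. (\<lambda>i. a * u1 i + b * u2 i + d * u3 i) \<in> P} \<in> pg_planes n"
proof -
  have "a = 0 \<and> b = 0 \<and> d = 0" if zero: "(\<lambda>i. a * u1 i + b * u2 i + d * u3 i) = (\<lambda>i. 0)" for a b d
  proof -
    define f where "f x = (if x = u1 then a else if x = u2 then b else d)" for x
    have "(\<Sum>x\<in>{u1, u2, u3}. smul (f x) x) = smul (f u1) u1 + smul (f u2) u2 + smul (f u3) u3"
      using distinct by (simp add: add.assoc)
    also have "\<dots> = (\<lambda>i. a * u1 i + b * u2 i + d * u3 i)"
      using distinct by (simp add: f_def plus_fun_def)
    finally have "(\<Sum>x\<in>{u1, u2, u3}. smul (f x) x) = (\<lambda>i. a * u1 i + b * u2 i + d * u3 i)" .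
    hence "\<forall>x\<in>{u1, u2, u3}. f x = 0"
      using ind zero vec.dependent_finite[of "{u1, u2, u3}"] by (auto simp: zero_fun_def)
    thus ?thesis using distinct by (simp add: f_def)
  qed
  thus ?thesis using vecs unfolding pg_planes_def by blast
qed

lemma supp_in_plane:
  fixes c :: "(nat \<Rightarrow> 'a::{finite,field}) set \<Rightarrow> 'a"
  assumes n: "n \<ge> 2" and B: "B \<subseteq> pg_vecs n" "vec.independent B" "card B \<le> 3"
    and spanned: "{v \<in> pg_vecs n. c (pg_point v) \<noteq> 0} \<subseteq> vec.span B"
  shows "\<exists>\<pi>\<in>pg_planes n. pg_supp n c \<subseteq> \<pi>"
proof -
  obtain B' where B': "B \<subseteq> B'" "B' \<subseteq> pg_vecs n" "vec.independent B'" "card B' = 3"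
    using independent_extend[OF B] n by auto
  then obtain u1 u2 u3 where u: "B' = {u1, u2, u3}" "u1 \<noteq> u2" "u2 \<noteq> u3" "u1 \<noteq> u3"
    by (metis card_3_iff)
  let ?\<pi> = "{P \<in> pg_points n. \<exists>a b d. (\<lambda>i. a * u1 i + b * u2 i + d * u3 i) \<in> P}"
  have "pg_supp n c \<subseteq> ?\<pi>"
  proof
    fix P assume "P \<in> pg_supp n c"
    then obtain v where P: "P \<in> pg_points n" "P = pg_point v" "v \<in> pg_vecs n" "c (pg_point v) \<noteq> 0"
      by (auto simp: pg_supp_def pg_points_iff)
    hence "v \<in> vec.span B'" using spanned vec.span_mono[OF B'(1)] by blast
    then obtain f where "v = (\<Sum>x\<in>{u1, u2, u3}. smul (f x) x)"
      using vec.span_finite[of "{u1, u2, u3}"] u(1) by auto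
    also have "(\<Sum>x\<in>{u1, u2, u3}. smul (f x) x) = smul (f u1) u1 + smul (f u2) u2 + smul (f u3) u3"
      using u(2-4) by (simp add: add.assoc)
    finally have "v = (\<lambda>i. f u1 * u1 i + f u2 * u2 i + f u3 * u3 i)" by (simp add: fun_eq_iff)
    thus "P \<in> ?\<pi>" using P pg_point_self by blast
  qed
  moreover have "?\<pi> \<in> pg_planes n" using plane_of_independent[OF u(2-4)] B'(2,3) u(1) by simp
  ultimately show ?thesis by blast
qed

lemma independent_quadruple_of_subset:
  fixes a1 a2 a3 b :: "nat \<Rightarrow> 'a::{finite,field}"
  assumes "distinct [a1, a2, a3, b]" "vec.independent {a1, a2, a3, b}"
  shows "independent_quadruple a1 a2 a3 b"
proof
  fix x1 x2 x3 x4 assume zero: "(\<lambda>i. x1 * a1 i + x2 * a2 i + x3 * a3 i + x4 * b i) = (\<lambda>i. 0)"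
  define f where "f x = (if x = a1 then x1 else if x = a2 then x2 else if x = a3 then x3 else x4)" for x
  have f: "f a1 = x1" "f a2 = x2" "f a3 = x3" "f b = x4" using assms(1) by (auto simp: f_def)
  have "(\<Sum>x\<in>{a1, a2, a3, b}. smul (f x) x)
      = smul (f a1) a1 + smul (f a2) a2 + smul (f a3) a3 + smul (f b) b"
    using assms(1) by (simp add: add.assoc)
  also have "\<dots> = (\<lambda>i. x1 * a1 i + x2 * a2 i + x3 * a3 i + x4 * b i)"
    by (simp add: f smul_def plus_fun_def)
  finally have "(\<Sum>x\<in>{a1, a2, a3, b}. smul (f x) x) = (\<lambda>i. x1 * a1 i + x2 * a2 i + x3 * a3 i + x4 * b i)" .
  hence "\<forall>x\<in>{a1, a2, a3, b}. f x = 0"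
    using assms(2) zero vec.dependent_finite[of "{a1, a2, a3, b}"] by (auto simp: zero_fun_def)
  thus "x1 = 0 \<and> x2 = 0 \<and> x3 = 0 \<and> x4 = 0" using f by auto
qed

text \<open>A minimum weight codeword has weight at most 2q, so by the reduction above its
  support vectors contain no four independent ones.\<close>

lemma min_weight_support_rank:
  fixes c :: "(nat \<Rightarrow> 'a::{finite,field}) set \<Rightarrow> 'a"
  assumes n: "n \<ge> 2" and min: "min_weight_codeword (pg_dual_code n) n c"
    and B: "B \<subseteq> {v \<in> pg_vecs n. c (pg_point v) \<noteq> 0}" "vec.independent B"
  shows "card B \<le> 3"
proof (rule ccontr)
  have c: "c \<in> pg_dual_code n"
    and minimal: "\<And>c' :: (nat \<Rightarrow> 'a) set \<Rightarrow> 'a. c' \<in> pg_dual_code n \<Longrightarrow> pg_supp n c' \<noteq> {} \<Longrightarrow>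
                    pg_weight n c \<le> pg_weight n c'"
    using min unfolding min_weight_codeword_def by auto
  have small: "pg_weight n c \<le> 2 * card (UNIV::'a set)"
    using minimal[OF two_lines_word_dual[OF n] two_lines_word_nonzero[OF n]] two_lines_word_weight
    by (rule le_trans)
  assume "\<not> card B \<le> 3"
  then obtain T where T: "T \<subseteq> B" "card T = 4"
    using obtain_subset_with_card_n[of 4 B] by auto
  then obtain b where b: "b \<in> T" by fastforce
  with T have "card (T - {b}) = 3" by (simp add: card_Diff_singleton_if)
  then obtain a1 a2 a3 where a: "T - {b} = {a1, a2, a3}" "a1 \<noteq> a2" "a2 \<noteq> a3" "a1 \<noteq> a3"
    by (metis card_3_iff)
  hence T_eq: "T = {a1, a2, a3, b}" "distinct [a1, a2, a3, b]" using b by auto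
  interpret independent_quadruple a1 a2 a3 b
    using independent_quadruple_of_subset T_eq vec.independent_mono[OF B(2)] T(1) by metis
  have "a1 \<in> pg_vecs n \<and> c (pg_point a1) \<noteq> 0" "a2 \<in> pg_vecs n \<and> c (pg_point a2) \<noteq> 0"
    "a3 \<in> pg_vecs n \<and> c (pg_point a3) \<noteq> 0" "b \<in> pg_vecs n \<and> c (pg_point b) \<noteq> 0"
    using B(1) T(1) T_eq(1) by auto
  then obtain c' :: "(nat \<Rightarrow> 'a) set \<Rightarrow> 'a"
    where c': "c' \<in> pg_dual_code n" "pg_supp n c' \<noteq> {}" "pg_weight n c' < pg_weight n c"
    using shorter_codeword_of_independent_support[OF c _ _ _ _ _ _ _ _ _ small] n by auto
  thus False using minimal[OF c'(1,2)] by simp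
qed

theorem mainTheorem16:
  fixes n :: nat and c :: "(nat \<Rightarrow> 'a::{finite,field}) set \<Rightarrow> 'a"
  assumes "n \<ge> 3"
    and "min_weight_codeword (pg_dual_code n) n c"
  shows "\<exists>\<pi>\<in>pg_planes n. pg_supp n c \<subseteq> \<pi>"
proof -
  have n: "n \<ge> 2" using assms(1) by simp
  obtain B where B: "B \<subseteq> {v \<in> pg_vecs n. c (pg_point v) \<noteq> 0}" "vec.independent B"
    "{v \<in> pg_vecs n. c (pg_point v) \<noteq> 0} \<subseteq> vec.span B"
    using vec.maximal_independent_subset by blast
  have "card B \<le> 3" by (rule min_weight_support_rank[OF n assms(2) B(1,2)])
  moreover have "B \<subseteq> pg_vecs n" using B(1) by blast
  ultimately show ?thesis using supp_in_plane[OF n _ B(2) _ B(3)] by blast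
qed

end
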